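(* Let $\rho_1,\rho_2\in[\lambda_0,\lambda_1]$ be the thresholds defined below. Then the optimal action on the boundary of the rectangle $[\lambda_0,\lambda_1]^2$ is as follows: (a) On $p_2=\lambda_0$: for $\lambda_0\le p_1\le\rho_1$, $(p_1,\lambda_0)\in\Phi_{B_b}$; for $\rho_1<p_1\le\lambda_1$, $(p_1,\lambda_0)\in\Phi_{B_1}$. (b) On $p_2=\lambda_1$: for $\rho_2\le p_1\le\lambda_1$, $(p_1,\lambda_1)\in\Phi_{B_b}$; for $\lambda_0\le p_1<\rho_2$, $(p_1,\lambda_1)\in\Phi_{B_2}$. (c) On $p_1=\lambda_0$: for $\lambda_0\le p_2\le\rho_1$, $(\lambda_0,p_2)\in\Phi_{B_b}$; for $\rho_1<p_2\le\lambda_1$, $(\lambda_0,p_2)\in\Phi_{B_2}$. (d) On $p_1=\lambda_1$: for $\rho_2\le p_2\le\lambda_1$, $(\lambda_1,p_2)\in\Phi_{B_b}$; for $\lambda_0\le p_2<\rho_2$, $(\lambda_1,p_2)\in\Phi_{B_1}$.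
   Context: Fix parameters $0\le\lambda_0\le\lambda_1\le 1$, a discount factor $\beta\in[0,1)$, and rates $0<R_l<R_h<2R_l$. Let $\alpha=\lambda_1-\lambda_0$ and $T(p)=\alpha p+\lambda_0$. The model consists of two independent, identical Gilbert–Elliott channels with $\Pr[\text{good}\mid\text{good}]=\lambda_1$ and $\Pr[\text{good}\mid\text{bad}]=\lambda_0$. The belief state is $(p_1,p_2)\in[0,1]^2$, and there are three actions, $B_b$, $B_1$ and $B_2$. Let $V:[0,1]^2\to\mathbb R$ be the optimal expected total discounted reward, i.e. the unique bounded function satisfying $V=\max\{V_{B_b},V_{B_1},V_{B_2}\}$, where $V_{B_b}(p_1,p_2)=p_1R_l+p_2R_l+\beta[(1-p_1)(1-p_2)V(\lambda_0,\lambda_0)+p_1(1-p_2)V(\lambda_1,\lambda_0)+(1-p_1)p_2V(\lambda_0,\lambda_1)+p_1p_2V(\lambda_1,\lambda_1)]$, $V_{B_1}(p_1,p_2)=p_1R_h+\beta[(1-p_1)V(\lambda_0,T(p_2))+p_1V(\lambda_1,T(p_2))]$, $V_{B_2}(p_1,p_2)=p_2R_h+\beta[(1-p_2)V(T(p_1),\lambda_0)+p_2V(T(p_1),\lambda_1)]$. For $a\in\{B_b,B_1,B_2\}$, the decision region is $\Phi_a=\{(p_1,p_2)\in[0,1]^2: V(p_1,p_2)=V_a(p_1,p_2)\}$. The thresholds $\rho_1,\rho_2\in[\lambda_0,\lambda_1]$ are defined by $\{p_1\in[\lambda_0,\lambda_1]:(p_1,\lambda_0)\in\Phi_{B_b}\}=[\lambda_0,\rho_1]$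 and $\{p_1\in[\lambda_0,\lambda_1]:(p_1,\lambda_1)\in\Phi_{B_b}\}=[\rho_2,\lambda_1]$; the paper establishes that both sets are intervals of this form. *)

theory Defs
  imports Complex_Main
begin

datatype action = Bb | B1 | B2

definition Tmap :: "real \<Rightarrow> real \<Rightarrow> real \<Rightarrow> real" where
  "Tmap l0 l1 p = (l1 - l0) * p + l0"

fun Qval :: "real \<Rightarrow> real \<Rightarrow> real \<Rightarrow> real \<Rightarrow> real \<Rightarrow> (real \<Rightarrow> real \<Rightarrow> real)
              \<Rightarrow> action \<Rightarrow> real \<Rightarrow> real \<Rightarrow> real" where
  "Qval l0 l1 \<beta> Rl Rh V Bb p1 p2 =
     p1 * Rl + p2 * Rl + \<beta> * ((1 - p1) * (1 - p2) * V l0 l0 + p1 * (1 - p2) * V l1 l0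
        + (1 - p1) * p2 * V l0 l1 + p1 * p2 * V l1 l1)"
| "Qval l0 l1 \<beta> Rl Rh V B1 p1 p2 =
     p1 * Rh + \<beta> * ((1 - p1) * V l0 (Tmap l0 l1 p2) + p1 * V l1 (Tmap l0 l1 p2))"
| "Qval l0 l1 \<beta> Rl Rh V B2 p1 p2 =
     p2 * Rh + \<beta> * ((1 - p2) * V (Tmap l0 l1 p1) l0 + p2 * V (Tmap l0 l1 p1) l1)"

definition is_opt_value :: "real \<Rightarrow> real \<Rightarrow> real \<Rightarrow> real \<Rightarrow> real \<Rightarrow> (real \<Rightarrow> real \<Rightarrow> real) \<Rightarrow> bool" where
  "is_opt_value l0 l1 \<beta> Rl Rh V \<longleftrightarrow>
     (\<exists>M. \<forall>p1\<in>{0..1}. \<forall>p2\<in>{0..1}. \<bar>V p1 p2\<bar> \<le> M) \<and>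
     (\<forall>p1\<in>{0..1}. \<forall>p2\<in>{0..1}. V p1 p2 =
        max (Qval l0 l1 \<beta> Rl Rh V Bb p1 p2)
            (max (Qval l0 l1 \<beta> Rl Rh V B1 p1 p2) (Qval l0 l1 \<beta> Rl Rh V B2 p1 p2)))"

definition Phi :: "real \<Rightarrow> real \<Rightarrow> real \<Rightarrow> real \<Rightarrow> real \<Rightarrow> (real \<Rightarrow> real \<Rightarrow> real) \<Rightarrow> action \<Rightarrow> (real \<times> real) set" where
  "Phi l0 l1 \<beta> Rl Rh V a =
     {(p1, p2). p1 \<in> {0..1} \<and> p2 \<in> {0..1} \<and> V p1 p2 = Qval l0 l1 \<beta> Rl Rh V a p1 p2}"

end

theory Submission
  imports Defs
begin

(* Two structural facts are
   proved by the same contraction argument: a defect quantity is bounded, and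
   every bound K on it improves to beta * K; hence it is <= 0.
     (1) V is symmetric, V p q = V q p  (defect |V p q - V q p|);
     (2) V is convex in its first argument (defect = convexity gap), since B_b
         and B_1 are affine in p1 while B_2 is a discounted convex combination
         of values of V, and the maximum of such functions stays convex.
   Convexity along the segment from lambda_0 to lambda_1 compares the value
   after one round of a single-channel action with the value after B_b; with
   Rh < 2 Rl this shows that B_2 is never better than B_b on the edge
   p2 = lambda_0, and B_1 never better than B_b on the edge p2 = lambda_1.
   So on those edges, off the B_b region the remaining action is optimal; the
   threshold hypotheses give parts (a), (b), and symmetry of V transports
   them to the edges p1 = lambda_0, p1 = lambda_1, giving (c), (d). *)

lemma convex_comb_le:
  fixes t A B K :: real
  assumes "0 \<le> t" "t \<le> 1" "A \<le> K" "B \<le> K"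
  shows "(1-t)*A + t*B \<le> K"
proof -
  have "(1-t)*A + t*B \<le> (1-t)*K + t*K" using assms by (intro add_mono mult_left_mono) auto
  then show ?thesis by (simp add: algebra_simps)
qed

lemma convex_comb_in_unit:
  fixes t a c :: real
  assumes "a \<in> {0..1}" "c \<in> {0..1}" "t \<in> {0..1}"
  shows "(1-t)*a + t*c \<in> {0..1}"
  using convex_comb_le[of t a 1 c] convex_comb_le[of t "-a" 0 "-c"] assms
  by (auto simp: algebra_simps)

lemma convex_comb_abs_le:
  fixes t A B K :: real
  assumes "0 \<le> t" "t \<le> 1" "\<bar>A\<bar> \<le> K" "\<bar>B\<bar> \<le> K"
  shows "\<bar>(1-t)*A + t*B\<bar> \<le> K"
  using convex_comb_le[OF assms(1,2), of A K B] convex_comb_le[OF assms(1,2), of "-A" K "-B"] assms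
  by (auto simp: abs_le_iff algebra_simps)

text \<open>The maximum of three numbers is 1-Lipschitz in the sup norm; the last two
  arguments are compared crosswise, matching the exchange of B_1 and B_2.\<close>
lemma max3_diff_abs_le:
  fixes a b c a' b' c' e :: real
  assumes "\<bar>a-a'\<bar> \<le> e" "\<bar>b-b'\<bar> \<le> e" "\<bar>c-c'\<bar> \<le> e"
  shows "\<bar>max a (max b c) - max a' (max c' b')\<bar> \<le> e"
  using assms by (simp add: max_def abs_le_iff)

lemma max3_mem:
  fixes a b c :: real
  shows "max a (max b c) \<in> {a, b, c}"
  by (simp add: max_def)

lemma contraction_nonpos:
  fixes f :: "'a \<Rightarrow> real" and \<beta> C :: real
  assumes "0 \<le> \<beta>" "\<beta> < 1"
    and bounded: "\<forall>s\<in>S. f s \<le> C"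
    and improve: "\<And>K. \<forall>s\<in>S. f s \<le> K \<Longrightarrow> \<forall>s\<in>S. f s \<le> \<beta> * K"
    and "s \<in> S"
  shows "f s \<le> 0"
proof -
  have iter: "\<forall>s\<in>S. f s \<le> \<beta>^n * C" for n
    by (induction n) (use bounded improve in \<open>auto simp: mult.assoc\<close>)
  have "(\<lambda>n. \<beta>^n * C) \<longlonglongrightarrow> 0 * C"
    by (intro tendsto_mult_right LIMSEQ_power_zero) (use assms in auto)
  then show ?thesis using iter \<open>s \<in> S\<close> by (intro LIMSEQ_le_const[where X="\<lambda>n. \<beta>^n * C"]) auto
qed

lemma lower_threshold_iff:
  fixes a b c x :: real
  assumes "{y \<in> {a..b}. P y} = {a..c}" "c \<le> b" "a \<le> x" "x \<le> b"
  shows "P x \<longleftrightarrow> x \<le> c"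
proof -
  have "P x \<longleftrightarrow> x \<in> {y \<in> {a..b}. P y}" using assms(3,4) by simp
  also have "\<dots> \<longleftrightarrow> x \<in> {a..c}" by (simp only: assms(1))
  finally show ?thesis using assms(3,4) by simp
qed

lemma upper_threshold_iff:
  fixes a b c x :: real
  assumes "{y \<in> {a..b}. P y} = {c..b}" "a \<le> c" "a \<le> x" "x \<le> b"
  shows "P x \<longleftrightarrow> c \<le> x"
proof -
  have "P x \<longleftrightarrow> x \<in> {y \<in> {a..b}. P y}" using assms(3,4) by simp
  also have "\<dots> \<longleftrightarrow> x \<in> {c..b}" by (simp only: assms(1))
  finally show ?thesis using assms(3,4) by simp
qed

locale bellman_solution =
  fixes l0 l1 \<beta> Rl Rh :: real and V :: "real \<Rightarrow> real \<Rightarrow> real"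
  assumes lambda: "0 \<le> l0" "l0 \<le> l1" "l1 \<le> 1"
    and discount: "0 \<le> \<beta>" "\<beta> < 1"
    and optimal: "is_opt_value l0 l1 \<beta> Rl Rh V"
begin

abbreviation "Q a p q \<equiv> Qval l0 l1 \<beta> Rl Rh V a p q"
abbreviation "T p \<equiv> Tmap l0 l1 p"
abbreviation "\<Phi> a \<equiv> Phi l0 l1 \<beta> Rl Rh V a"

lemma bellman: "p \<in> {0..1} \<Longrightarrow> q \<in> {0..1} \<Longrightarrow> V p q = max (Q Bb p q) (max (Q B1 p q) (Q B2 p q))"
  using optimal unfolding is_opt_value_def by blast

lemma bounded:
  obtains M where "\<forall>p\<in>{0..1}. \<forall>q\<in>{0..1}. \<bar>V p q\<bar> \<le> M"
  using optimal unfolding is_opt_value_def by blast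

lemma l0_in: "l0 \<in> {0..1}" and l1_in: "l1 \<in> {0..1}"
  using lambda by auto

lemma T_eq: "T p = (1-p)*l0 + p*l1"
  by (simp add: Tmap_def algebra_simps)

lemma T_in:
  assumes "p \<in> {0..1}"
  shows "T p \<in> {0..1}"
proof -
  have "0 \<le> (l1 - l0) * p" "(l1 - l0) * p \<le> l1 - l0"
    using assms lambda by (auto intro: mult_left_le)
  then show ?thesis using lambda by (auto simp: Tmap_def)
qed

subsection \<open>Symmetry\<close>

text \<open>Swapping the channels swaps B_1 and B_2 and fixes B_b, so the asymmetry of
  V contracts by the factor beta.\<close>
lemma asymmetry_contracts:
  assumes IH: "\<forall>p\<in>{0..1}. \<forall>q\<in>{0..1}. \<bar>V p q - V q p\<bar> \<le> K"
    and p: "p \<in> {0..1}" and q: "q \<in> {0..1}"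
  shows "\<bar>V p q - V q p\<bar> \<le> \<beta> * K"
proof -
  have disc: "\<bar>\<beta> * X\<bar> \<le> \<beta> * K" if "\<bar>X\<bar> \<le> K" for X
    using that discount by (simp add: abs_mult mult_left_mono)
  have "\<bar>(p - q) * (V l1 l0 - V l0 l1)\<bar> \<le> 1 * K"
    unfolding abs_mult using p q IH l0_in l1_in by (intro mult_mono) auto
  moreover have "Q Bb p q - Q Bb q p = \<beta> * ((p - q) * (V l1 l0 - V l0 l1))"
    by (simp add: algebra_simps)
  ultimately have Bb: "\<bar>Q Bb p q - Q Bb q p\<bar> \<le> \<beta> * K" using disc by simp
  have "Q B1 p q - Q B2 q p = \<beta> * ((1-p)*(V l0 (T q) - V (T q) l0) + p*(V l1 (T q) - V (T q) l1))"
    by (simp add: algebra_simps)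
  moreover have "\<bar>(1-p)*(V l0 (T q) - V (T q) l0) + p*(V l1 (T q) - V (T q) l1)\<bar> \<le> K"
    using p IH l0_in l1_in T_in[OF q] by (intro convex_comb_abs_le) auto
  ultimately have B12: "\<bar>Q B1 p q - Q B2 q p\<bar> \<le> \<beta> * K" using disc by simp
  have "Q B2 p q - Q B1 q p = \<beta> * ((1-q)*(V (T p) l0 - V l0 (T p)) + q*(V (T p) l1 - V l1 (T p)))"
    by (simp add: algebra_simps)
  moreover have "\<bar>(1-q)*(V (T p) l0 - V l0 (T p)) + q*(V (T p) l1 - V l1 (T p))\<bar> \<le> K"
    using q IH l0_in l1_in T_in[OF p] by (intro convex_comb_abs_le) auto
  ultimately have B21: "\<bar>Q B2 p q - Q B1 q p\<bar> \<le> \<beta> * K" using disc by simp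
  show ?thesis
    unfolding bellman[OF p q] bellman[OF q p] using Bb B12 B21 by (rule max3_diff_abs_le)
qed

theorem V_symmetric:
  assumes "p \<in> {0..1}" "q \<in> {0..1}"
  shows "V p q = V q p"
proof -
  obtain M where M: "\<forall>p\<in>{0..1}. \<forall>q\<in>{0..1}. \<bar>V p q\<bar> \<le> M" by (rule bounded)
  have "(\<lambda>(p, q). \<bar>V p q - V q p\<bar>) (p, q) \<le> 0"
  proof (rule contraction_nonpos[OF discount, where S="{0..1} \<times> {0..1}" and C="2*M"])
    show "\<forall>s\<in>{0..1} \<times> {0..1}. (\<lambda>(p, q). \<bar>V p q - V q p\<bar>) s \<le> 2 * M"
    proof clarsimp
      fix p q :: real assume "0 \<le> p" "p \<le> 1" "0 \<le> q" "q \<le> 1"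
      then have "\<bar>V p q\<bar> \<le> M" "\<bar>V q p\<bar> \<le> M" using M by auto
      then show "\<bar>V p q - V q p\<bar> \<le> 2 * M" by (simp add: abs_le_iff)
    qed
    show "\<forall>s\<in>{0..1} \<times> {0..1}. (\<lambda>(p, q). \<bar>V p q - V q p\<bar>) s \<le> \<beta> * K"
      if "\<forall>s\<in>{0..1} \<times> {0..1}. (\<lambda>(p, q). \<bar>V p q - V q p\<bar>) s \<le> K" for K
      using that asymmetry_contracts[of K] by auto
  qed (use assms in auto)
  then show ?thesis by simp
qed

lemma Q_Bb_swap: "Q Bb p q = Q Bb q p"
  using V_symmetric[OF l0_in l1_in] by (simp add: algebra_simps)

lemma Q_B1_swap: "p \<in> {0..1} \<Longrightarrow> q \<in> {0..1} \<Longrightarrow> Q B1 p q = Q B2 q p"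
  using V_symmetric[OF l0_in T_in] V_symmetric[OF l1_in T_in] by simp

lemma Phi_iff: "(p, q) \<in> \<Phi> a \<longleftrightarrow> p \<in> {0..1} \<and> q \<in> {0..1} \<and> V p q = Q a p q"
  by (simp add: Phi_def)

lemma Phi_Bb_swap: "(p, q) \<in> \<Phi> Bb \<Longrightarrow> (q, p) \<in> \<Phi> Bb"
  using V_symmetric[of p q] Q_Bb_swap[of p q] unfolding Phi_iff by auto

lemma Phi_B1_swap: "(p, q) \<in> \<Phi> B1 \<Longrightarrow> (q, p) \<in> \<Phi> B2"
  using V_symmetric[of p q] Q_B1_swap[of p q] unfolding Phi_iff by auto

lemma Phi_B2_swap: "(p, q) \<in> \<Phi> B2 \<Longrightarrow> (q, p) \<in> \<Phi> B1"
  using V_symmetric[of p q] Q_B1_swap[of q p] unfolding Phi_iff by auto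

subsection \<open>Convexity in the first argument\<close>

text \<open>The convexity gap of V in its first argument contracts by beta: B_b and B_1
  are affine in p1, and B_2 depends on p1 only through V (T p1) _, where T is affine.\<close>
lemma convexity_gap_contracts:
  assumes IH: "\<forall>a\<in>{0..1}. \<forall>c\<in>{0..1}. \<forall>t\<in>{0..1}. \<forall>x\<in>{0..1}.
                  V ((1-t)*a + t*c) x - (1-t)*V a x - t*V c x \<le> K"
    and a: "a \<in> {0..1}" and c: "c \<in> {0..1}" and t: "t \<in> {0..1}" and x: "x \<in> {0..1}"
  shows "V ((1-t)*a + t*c) x - (1-t)*V a x - t*V c x \<le> \<beta> * K"
proof -
  define m where "m = (1-t)*a + t*c"
  have m: "m \<in> {0..1}" unfolding m_def using a c t by (rule convex_comb_in_unit)
  have below: "(1-t)*Q act a x + t*Q act c x \<le> (1-t)*V a x + t*V c x" for act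
  proof -
    have "Q act a x \<le> V a x" "Q act c x \<le> V c x"
      using bellman[OF a x] bellman[OF c x] by (cases act; auto)+
    then show ?thesis using t by (intro add_mono mult_left_mono) auto
  qed
  have "0 \<le> K" \<comment> \<open>the gap vanishes for a = c\<close>
    using IH a t x by (force simp: algebra_simps)
  then have gap0: "0 \<le> \<beta> * K" using discount by simp
  have Bb: "Q Bb m x = (1-t)*Q Bb a x + t*Q Bb c x" by (simp add: m_def algebra_simps)
  have B1: "Q B1 m x = (1-t)*Q B1 a x + t*Q B1 c x" by (simp add: m_def algebra_simps)
  have B2: "Q B2 m x - (1-t)*Q B2 a x - t*Q B2 c x \<le> \<beta> * K"
  proof -
    have Tm: "T m = (1-t)*T a + t*T c" by (simp add: m_def Tmap_def algebra_simps)
    have "Q B2 m x - (1-t)*Q B2 a x - t*Q B2 c x =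
      \<beta> * ((1-x)*(V (T m) l0 - (1-t)*V (T a) l0 - t*V (T c) l0)
          + x*(V (T m) l1 - (1-t)*V (T a) l1 - t*V (T c) l1))"
      by (simp add: algebra_simps)
    moreover have "(1-x)*(V (T m) l0 - (1-t)*V (T a) l0 - t*V (T c) l0)
          + x*(V (T m) l1 - (1-t)*V (T a) l1 - t*V (T c) l1) \<le> K"
      unfolding Tm using x IH T_in[OF a] T_in[OF c] t l0_in l1_in by (intro convex_comb_le) auto
    ultimately show ?thesis using discount by (simp add: mult_left_mono)
  qed
  have "V m x \<in> {Q Bb m x, Q B1 m x, Q B2 m x}"
    unfolding bellman[OF m x] by (rule max3_mem)
  then consider "V m x = Q Bb m x" | "V m x = Q B1 m x" | "V m x = Q B2 m x"
    by blast
  then have "V m x - (1-t)*V a x - t*V c x \<le> \<beta> * K"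
    by cases (use Bb B1 B2 below[of Bb] below[of B1] below[of B2] gap0 in linarith)+
  then show ?thesis by (simp add: m_def)
qed

theorem V_convex_first:
  assumes "a \<in> {0..1}" "c \<in> {0..1}" "t \<in> {0..1}" "x \<in> {0..1}"
  shows "V ((1-t)*a + t*c) x \<le> (1-t)*V a x + t*V c x"
proof -
  obtain M where M: "\<forall>p\<in>{0..1}. \<forall>q\<in>{0..1}. \<bar>V p q\<bar> \<le> M" by (rule bounded)
  let ?gap = "\<lambda>(a, c, t, x). V ((1-t)*a + t*c) x - (1-t)*V a x - t*V c x"
  let ?S = "{0..1::real} \<times> {0..1::real} \<times> {0..1::real} \<times> {0..1::real}"
  have "?gap (a, c, t, x) \<le> 0"
  proof (rule contraction_nonpos[OF discount, where S="?S" and C="2*M"])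
    show "\<forall>s\<in>?S. ?gap s \<le> 2 * M"
    proof (clarsimp)
      fix a c t x :: real
      assume h: "0 \<le> a" "a \<le> 1" "0 \<le> c" "c \<le> 1" "0 \<le> t" "t \<le> 1" "0 \<le> x" "x \<le> 1"
      have "(1-t)*a + t*c \<in> {0..1}" using h by (intro convex_comb_in_unit) auto
      then have "\<bar>V ((1-t)*a + t*c) x\<bar> \<le> M" using M h by auto
      moreover have "\<bar>(1-t)*V a x + t*V c x\<bar> \<le> M" using h M by (intro convex_comb_abs_le) auto
      ultimately show "V ((1-t)*a + t*c) x - (1-t)*V a x - t*V c x \<le> 2 * M"
        by (simp only: abs_le_iff) linarith
    qed
    show "\<forall>s\<in>?S. ?gap s \<le> \<beta> * K" if "\<forall>s\<in>?S. ?gap s \<le> K" for K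
      using that convexity_gap_contracts[of K] by auto
  qed (use assms in auto)
  then show ?thesis by simp
qed

lemma V_T_first: "p \<in> {0..1} \<Longrightarrow> x \<in> {0..1} \<Longrightarrow> V (T p) x \<le> (1-p)*V l0 x + p*V l1 x"
  using V_convex_first[OF l0_in l1_in] by (simp add: T_eq)

lemma V_T_second: "p \<in> {0..1} \<Longrightarrow> x \<in> {0..1} \<Longrightarrow> V x (T p) \<le> (1-p)*V x l0 + p*V x l1"
  using V_T_first V_symmetric T_in l0_in l1_in by metis

subsection \<open>Actions on the edges p2 = l0 and p2 = l1\<close>

lemma Q_B2_le_Bb_bottom:
  assumes p: "l0 \<le> p" "p \<le> l1" and R: "0 < Rl" "Rh < 2 * Rl"
  shows "Q B2 p l0 \<le> Q Bb p l0"
proof -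
  have p01: "p \<in> {0..1}" using p lambda by auto
  have "(1-l0)*V (T p) l0 + l0*V (T p) l1
        \<le> (1-l0)*((1-p)*V l0 l0 + p*V l1 l0) + l0*((1-p)*V l0 l1 + p*V l1 l1)"
    using V_T_first[OF p01 l0_in] V_T_first[OF p01 l1_in] lambda
    by (intro add_mono mult_left_mono) auto
  then have future: "\<beta> * ((1-l0)*V (T p) l0 + l0*V (T p) l1)
        \<le> \<beta> * ((1-p)*(1-l0)*V l0 l0 + p*(1-l0)*V l1 l0 + (1-p)*l0*V l0 l1 + p*l0*V l1 l1)"
    using discount by (intro mult_left_mono) (auto simp: algebra_simps)
  have "l0 * Rh \<le> l0 * (2*Rl)" using lambda R by (intro mult_left_mono) auto
  also have "\<dots> \<le> (p + l0) * Rl" using p R by (simp add: algebra_simps)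
  finally have now: "l0 * Rh \<le> p * Rl + l0 * Rl" by (simp add: algebra_simps)
  show ?thesis using now future by simp
qed

lemma Q_B1_le_Bb_top:
  assumes p: "l0 \<le> p" "p \<le> l1" and R: "Rl < Rh" "Rh < 2 * Rl"
  shows "Q B1 p l1 \<le> Q Bb p l1"
proof -
  have p01: "p \<in> {0..1}" using p lambda by auto
  have "(1-p)*V l0 (T l1) + p*V l1 (T l1)
        \<le> (1-p)*((1-l1)*V l0 l0 + l1*V l0 l1) + p*((1-l1)*V l1 l0 + l1*V l1 l1)"
    using V_T_second[OF l1_in l0_in] V_T_second[OF l1_in l1_in] p01
    by (intro add_mono mult_left_mono) auto
  then have future: "\<beta> * ((1-p)*V l0 (T l1) + p*V l1 (T l1))
        \<le> \<beta> * ((1-p)*(1-l1)*V l0 l0 + p*(1-l1)*V l1 l0 + (1-p)*l1*V l0 l1 + p*l1*V l1 l1)"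
    using discount by (intro mult_left_mono) (auto simp: algebra_simps)
  have "p * (Rh - Rl) \<le> l1 * (Rh - Rl)" using p R by (intro mult_right_mono) auto
  also have "\<dots> \<le> l1 * Rl" using lambda R by (intro mult_left_mono) auto
  finally have now: "p * Rh \<le> p * Rl + l1 * Rl" by (simp add: algebra_simps)
  show ?thesis using now future by simp
qed

lemma bottom_edge_B1:
  assumes "l0 \<le> p" "p \<le> l1" "0 < Rl" "Rh < 2 * Rl" and "(p, l0) \<notin> \<Phi> Bb"
  shows "(p, l0) \<in> \<Phi> B1"
proof -
  have p01: "p \<in> {0..1}" using assms lambda by auto
  show ?thesis
    using bellman[OF p01 l0_in] Q_B2_le_Bb_bottom[OF assms(1-4)] assms(5) p01 l0_in
    unfolding Phi_iff by (auto simp: max_def split: if_splits)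
qed

lemma top_edge_B2:
  assumes "l0 \<le> p" "p \<le> l1" "Rl < Rh" "Rh < 2 * Rl" and "(p, l1) \<notin> \<Phi> Bb"
  shows "(p, l1) \<in> \<Phi> B2"
proof -
  have p01: "p \<in> {0..1}" using assms lambda by auto
  show ?thesis
    using bellman[OF p01 l1_in] Q_B1_le_Bb_top[OF assms(1-4)] assms(5) p01 l1_in
    unfolding Phi_iff by (auto simp: max_def split: if_splits)
qed

end

theorem theorem6:
  fixes l0 l1 \<beta> Rl Rh \<rho>1 \<rho>2 :: real and V :: "real \<Rightarrow> real \<Rightarrow> real"
  assumes "0 \<le> l0" "l0 \<le> l1" "l1 \<le> 1"
    and "0 \<le> \<beta>" "\<beta> < 1"
    and "0 < Rl" "Rl < Rh" "Rh < 2 * Rl"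
    and V: "is_opt_value l0 l1 \<beta> Rl Rh V"
    and "\<rho>1 \<in> {l0..l1}" "\<rho>2 \<in> {l0..l1}"
    and rho1: "{p1 \<in> {l0..l1}. (p1, l0) \<in> Phi l0 l1 \<beta> Rl Rh V Bb} = {l0..\<rho>1}"
    and rho2: "{p1 \<in> {l0..l1}. (p1, l1) \<in> Phi l0 l1 \<beta> Rl Rh V Bb} = {\<rho>2..l1}"
  shows
    "(\<forall>p1. l0 \<le> p1 \<and> p1 \<le> \<rho>1 \<longrightarrow> (p1, l0) \<in> Phi l0 l1 \<beta> Rl Rh V Bb) \<and>
     (\<forall>p1. \<rho>1 < p1 \<and> p1 \<le> l1 \<longrightarrow> (p1, l0) \<in> Phi l0 l1 \<beta> Rl Rh V B1) \<and>
     (\<forall>p1. \<rho>2 \<le> p1 \<and> p1 \<le> l1 \<longrightarrow> (p1, l1) \<in> Phi l0 l1 \<beta> Rl Rh V Bb) \<and>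
     (\<forall>p1. l0 \<le> p1 \<and> p1 < \<rho>2 \<longrightarrow> (p1, l1) \<in> Phi l0 l1 \<beta> Rl Rh V B2) \<and>
     (\<forall>p2. l0 \<le> p2 \<and> p2 \<le> \<rho>1 \<longrightarrow> (l0, p2) \<in> Phi l0 l1 \<beta> Rl Rh V Bb) \<and>
     (\<forall>p2. \<rho>1 < p2 \<and> p2 \<le> l1 \<longrightarrow> (l0, p2) \<in> Phi l0 l1 \<beta> Rl Rh V B2) \<and>
     (\<forall>p2. \<rho>2 \<le> p2 \<and> p2 \<le> l1 \<longrightarrow> (l1, p2) \<in> Phi l0 l1 \<beta> Rl Rh V Bb) \<and>
     (\<forall>p2. l0 \<le> p2 \<and> p2 < \<rho>2 \<longrightarrow> (l1, p2) \<in> Phi l0 l1 \<beta> Rl Rh V B1)"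
proof -
  interpret bellman_solution l0 l1 \<beta> Rl Rh V
    using assms by unfold_locales
  have bottom: "(p, l0) \<in> \<Phi> Bb \<longleftrightarrow> p \<le> \<rho>1" if "l0 \<le> p" "p \<le> l1" for p
    using lower_threshold_iff[OF rho1] assms(10) that by auto
  have top: "(p, l1) \<in> \<Phi> Bb \<longleftrightarrow> \<rho>2 \<le> p" if "l0 \<le> p" "p \<le> l1" for p
    using upper_threshold_iff[OF rho2] assms(11) that by auto
  have a: "(p, l0) \<in> \<Phi> Bb" if "l0 \<le> p" "p \<le> \<rho>1" for p
    using bottom that assms(10) by auto
  have b: "(p, l0) \<in> \<Phi> B1" if "\<rho>1 < p" "p \<le> l1" for p
    using bottom bottom_edge_B1 that assms by auto
  have c: "(p, l1) \<in> \<Phi> Bb" if "\<rho>2 \<le> p" "p \<le> l1" for p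
    using top that assms(11) by auto
  have d: "(p, l1) \<in> \<Phi> B2" if "l0 \<le> p" "p < \<rho>2" for p
    using top top_edge_B2 that assms by auto
  show ?thesis
    using a b c d Phi_Bb_swap Phi_B1_swap Phi_B2_swap by blast
qed

end
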